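(* Let $G$ be a group, $N\unlhd G$, and $M=\mathcal{M}(G,N)$. Then (i) $M$ is residually finite if and only if $G$ is residually finite; (ii) the action of $M$ on its $\mathcal{L}$-classes is residually finite if and only if the group $G/N$ is residually finite.
   Context: For a group $G$ with normal subgroup $N$, let $\overline{N}=\{\overline{n}:n\in N\}$ be a disjoint copy of $N$ and define the monoid $\mathcal{M}(G,N)$ by the presentation with generators $G\cup\overline{N}\cup\{h\}$ (together with the multiplication tables of $G$ and $\overline{N}$, and a zero $0$) and relations $hn=\overline{n}h$ $(n\in N)$, $he_G=e_{\overline{N}}h=h$, $g\overline{n}=\overline{n}g=gh=h\overline{n}=0$ ($g\in G$, $n\in N$). A monoid/group is residually finite if distinct elements are separated by homomorphisms to finite monoids/groups. $x\mathcal{L}y$ iff $Mx=My$; $M$ acts on the right on $M/\mathcal{L}$ via $L_x\cdot m=L_{xm}$. This action is residually finite iff for all $(s,t)\notin\mathcal{L}$ there is a finite-index right congruence $\rho$ on $M$ with $\mathcal{L}\subseteq\rho$ and $(s,t)\notin\rho$. *)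

theory Defs
  imports "HOL-Algebra.Coset"
begin

inductive pres_eq :: "'a set \<Rightarrow> ('a list \<times> 'a list) set \<Rightarrow> 'a list \<Rightarrow> 'a list \<Rightarrow> bool"
  for A R where
  pres_refl: "w \<in> lists A \<Longrightarrow> pres_eq A R w w"
| pres_rel: "(l, r) \<in> R \<Longrightarrow> u \<in> lists A \<Longrightarrow> v \<in> lists A \<Longrightarrow> pres_eq A R (u @ l @ v) (u @ r @ v)"
| pres_sym: "pres_eq A R w w' \<Longrightarrow> pres_eq A R w' w"
| pres_trans: "pres_eq A R w w' \<Longrightarrow> pres_eq A R w' w'' \<Longrightarrow> pres_eq A R w w''"

definition pres_class :: "'a set \<Rightarrow> ('a list \<times> 'a list) set \<Rightarrow> 'a list \<Rightarrow> 'a list set" where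
  "pres_class A R w = {w'. pres_eq A R w w'}"

definition presented_monoid :: "'a set \<Rightarrow> ('a list \<times> 'a list) set \<Rightarrow> 'a list set monoid" where
  "presented_monoid A R =
     \<lparr> carrier = pres_class A R ` lists A,
       mult = (\<lambda>X Y. {w. \<exists>x\<in>X. \<exists>y\<in>Y. pres_eq A R (x @ y) w}),
       one = pres_class A R [] \<rparr>"

text \<open>Generators: elements of G (GE g), the disjoint copy N-bar of N (NB n), h, and the zero.\<close>
datatype 'g gen = GE 'g | NB 'g | Hgen | Zgen

definition MGN_alph :: "('g, 'b) monoid_scheme \<Rightarrow> 'g set \<Rightarrow> 'g gen set" where
  "MGN_alph G N = GE ` carrier G \<union> NB ` N \<union> {Hgen, Zgen}"

definition MGN_rels :: "('g, 'b) monoid_scheme \<Rightarrow> 'g set \<Rightarrow> ('g gen list \<times> 'g gen list) set" where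
  "MGN_rels G N =
     \<comment> \<open>multiplication table of G\<close>
     {([GE a, GE b], [GE (a \<otimes>\<^bsub>G\<^esub> b)]) | a b. a \<in> carrier G \<and> b \<in> carrier G}
   \<union> \<comment> \<open>multiplication table of N-bar\<close>
     {([NB a, NB b], [NB (a \<otimes>\<^bsub>G\<^esub> b)]) | a b. a \<in> N \<and> b \<in> N}
   \<union> \<comment> \<open>zero\<close>
     {([Zgen, x], [Zgen]) | x. x \<in> MGN_alph G N}
   \<union> {([x, Zgen], [Zgen]) | x. x \<in> MGN_alph G N}
   \<union> \<comment> \<open>h n = n-bar h\<close>
     {([Hgen, GE n], [NB n, Hgen]) | n. n \<in> N}
   \<union> \<comment> \<open>h e_G = e_Nbar h = h\<close>
     {([Hgen, GE \<one>\<^bsub>G\<^esub>], [Hgen]), ([NB \<one>\<^bsub>G\<^esub>, Hgen], [Hgen])}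
   \<union> \<comment> \<open>g n-bar = n-bar g = g h = h n-bar = 0\<close>
     {([GE g, NB n], [Zgen]) | g n. g \<in> carrier G \<and> n \<in> N}
   \<union> {([NB n, GE g], [Zgen]) | g n. g \<in> carrier G \<and> n \<in> N}
   \<union> {([GE g, Hgen], [Zgen]) | g. g \<in> carrier G}
   \<union> {([Hgen, NB n], [Zgen]) | n. n \<in> N}"

definition MGN :: "('g, 'b) monoid_scheme \<Rightarrow> 'g set \<Rightarrow> 'g gen list set monoid" where
  "MGN G N = presented_monoid (MGN_alph G N) (MGN_rels G N)"

text \<open>Finite target monoids/groups are taken with carrier a set of naturals; every
  finite monoid is isomorphic to such a one.\<close>

definition monoid_res_finite :: "('a, 'b) monoid_scheme \<Rightarrow> bool" where
  "monoid_res_finite M \<longleftrightarrow>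
     (\<forall>x\<in>carrier M. \<forall>y\<in>carrier M. x \<noteq> y \<longrightarrow>
        (\<exists>(F :: nat monoid) f. monoid F \<and> finite (carrier F) \<and> f \<in> hom M F
            \<and> f \<one>\<^bsub>M\<^esub> = \<one>\<^bsub>F\<^esub> \<and> f x \<noteq> f y))"

definition group_res_finite :: "('a, 'b) monoid_scheme \<Rightarrow> bool" where
  "group_res_finite G \<longleftrightarrow>
     (\<forall>x\<in>carrier G. \<forall>y\<in>carrier G. x \<noteq> y \<longrightarrow>
        (\<exists>(F :: nat monoid) f. group F \<and> finite (carrier F) \<and> f \<in> hom G F \<and> f x \<noteq> f y))"

definition greenL :: "('a, 'b) monoid_scheme \<Rightarrow> ('a \<times> 'a) set" where
  "greenL M = {(x, y). x \<in> carrier M \<and> y \<in> carrier M \<and>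
                 (\<lambda>m. m \<otimes>\<^bsub>M\<^esub> x) ` carrier M = (\<lambda>m. m \<otimes>\<^bsub>M\<^esub> y) ` carrier M}"

definition right_congruence :: "('a, 'b) monoid_scheme \<Rightarrow> ('a \<times> 'a) set \<Rightarrow> bool" where
  "right_congruence M \<rho> \<longleftrightarrow> equiv (carrier M) \<rho> \<and>
     (\<forall>s t m. (s, t) \<in> \<rho> \<longrightarrow> m \<in> carrier M \<longrightarrow> (s \<otimes>\<^bsub>M\<^esub> m, t \<otimes>\<^bsub>M\<^esub> m) \<in> \<rho>)"

definition L_action_res_finite :: "('a, 'b) monoid_scheme \<Rightarrow> bool" where
  "L_action_res_finite M \<longleftrightarrow>
     (\<forall>s\<in>carrier M. \<forall>t\<in>carrier M. (s, t) \<notin> greenL M \<longrightarrow>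
        (\<exists>\<rho>. right_congruence M \<rho> \<and> finite (carrier M // \<rho>) \<and> greenL M \<subseteq> \<rho> \<and> (s, t) \<notin> \<rho>))"

end

theory Submission
  imports Defs "HOL-Algebra.Bij"
begin

text \<open>
  The presentation of \<open>\<M>(G,N)\<close> is solved by an explicit normal-form
  monoid \<open>model G N\<close> whose elements are \<open>1\<close>, \<open>0\<close>, \<open>g\<close>, \<open>n\<close>-bar and \<open>hg\<close>
  (\<open>g \<in> G\<close>, \<open>n \<in> N\<close>). Evaluating words in the model respects the relations,
  and every word rewrites to the normal form of its value; hence the model is
  isomorphic to \<open>\<M>(G,N)\<close>, and since both properties in the theorem are isomorphism
  invariants, it suffices to study the model.

  (i) \<open>G\<close> sits inside the model, and the image of \<open>G\<close> in a finite monoid is a finite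
  group; conversely the construction is functorial in \<open>G\<close>, so finite quotients of \<open>G\<close>
  induce finite quotients of the model.
  (ii) The \<open>\<L>\<close>-classes are \<open>{1}\<close>, \<open>{0}\<close>, \<open>G\<close>, \<open>N\<close> and the sets \<open>h(Ng)\<close>, labelled by
  the cosets \<open>Ng \<in> G/N\<close>. A finite quotient of \<open>G/N\<close> applied to the labels gives a
  right congruence of finite index containing \<open>\<L>\<close>. Conversely, \<open>G/N\<close> acts on the
  finitely many classes of such a congruence containing the elements \<open>hg\<close>, and the
  permutation representation of this action separates distinct cosets.
\<close>

lemma monoid_by_surjective_hom:
  assumes "monoid A" "h \<in> hom A B" "h ` carrier A = carrier B" "h \<one>\<^bsub>A\<^esub> = \<one>\<^bsub>B\<^esub>"
  shows "monoid B"
  using monoid.hom_imp_img_monoid[OF assms(1,2)] assms(3,4) by simp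

lemma group_by_surjective_hom:
  assumes "group A" "h \<in> hom A B" "h ` carrier A = carrier B" "h \<one>\<^bsub>A\<^esub> = \<one>\<^bsub>B\<^esub>"
  shows "group B"
  using group.hom_imp_img_group[OF assms(1,2)] assms(3,4) by simp

text \<open>The inverse of a monoid isomorphism is an isomorphism (the library states this
  for groups only).\<close>

lemma monoid_iso_inverse:
  assumes "monoid A" "h \<in> iso A B"
  shows "inv_into (carrier A) h \<in> iso B A"
proof -
  let ?h' = "inv_into (carrier A) h"
  have hom: "h \<in> hom A B" and bij: "bij_betw h (carrier A) (carrier B)"
    using assms(2) by (auto simp: iso_def)
  then have bij': "bij_betw ?h' (carrier B) (carrier A)"
    by (simp add: bij_betw_inv_into)
  then have closed: "\<And>x. x \<in> carrier B \<Longrightarrow> ?h' x \<in> carrier A"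
    by (meson bij_betwE)
  have "?h' (x \<otimes>\<^bsub>B\<^esub> y) = ?h' x \<otimes>\<^bsub>A\<^esub> ?h' y" if "x \<in> carrier B" "y \<in> carrier B" for x y
  proof (rule inv_into_f_eq)
    show "inj_on h (carrier A)" using bij by (simp add: bij_betw_def)
    show "?h' x \<otimes>\<^bsub>A\<^esub> ?h' y \<in> carrier A"
      using closed that assms(1) by (simp add: monoid.m_closed)
    show "h (?h' x \<otimes>\<^bsub>A\<^esub> ?h' y) = x \<otimes>\<^bsub>B\<^esub> y"
      using hom closed that bij bij_betw_inv_into_right[OF bij] by (simp add: hom_mult)
  qed
  then have "?h' \<in> hom B A" using closed by (intro homI)
  then show ?thesis using bij' by (simp add: iso_def)
qed

lemma finite_monoid_nat_copy:
  assumes "monoid K" "finite (carrier K)"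
  obtains F :: "nat monoid" and e where "monoid F" "finite (carrier F)" "e \<in> iso K F"
    "e \<one>\<^bsub>K\<^esub> = \<one>\<^bsub>F\<^esub>" "group K \<Longrightarrow> group F"
proof -
  obtain e :: "_ \<Rightarrow> nat" where inj: "inj_on e (carrier K)"
    using finite_imp_inj_to_nat_seg[OF assms(2)] by blast
  define F :: "nat monoid" where "F = \<lparr>carrier = e ` carrier K,
     mult = (\<lambda>a b. e (inv_into (carrier K) e a \<otimes>\<^bsub>K\<^esub> inv_into (carrier K) e b)),
     one = e \<one>\<^bsub>K\<^esub>\<rparr>"
  have hom: "e \<in> hom K F"
    using inj by (intro homI) (auto simp: F_def)
  have surj: "e ` carrier K = carrier F" and one: "e \<one>\<^bsub>K\<^esub> = \<one>\<^bsub>F\<^esub>"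
    by (simp_all add: F_def)
  show ?thesis
  proof
    show "monoid F" by (rule monoid_by_surjective_hom[OF assms(1) hom surj one])
    show "group F" if "group K" by (rule group_by_surjective_hom[OF that hom surj one])
    show "finite (carrier F)" using assms(2) surj[symmetric] by simp
    show "e \<in> iso K F" using hom inj surj by (simp add: iso_def bij_betw_def)
  qed (fact one)
qed

lemma separation_by_nat_monoid:
  assumes "monoid K" "finite (carrier K)" "f \<in> hom M K" "f \<one>\<^bsub>M\<^esub> = \<one>\<^bsub>K\<^esub>"
    and "x \<in> carrier M" "y \<in> carrier M" "f x \<noteq> f y"
  shows "\<exists>(F :: nat monoid) f. monoid F \<and> finite (carrier F) \<and> f \<in> hom M F
            \<and> f \<one>\<^bsub>M\<^esub> = \<one>\<^bsub>F\<^esub> \<and> f x \<noteq> f y"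
proof -
  obtain F :: "nat monoid" and e where F: "monoid F" "finite (carrier F)" "e \<in> iso K F"
    "e \<one>\<^bsub>K\<^esub> = \<one>\<^bsub>F\<^esub>"
    using finite_monoid_nat_copy[OF assms(1,2)] by metis
  have "inj_on e (carrier K)" using F(3) by (simp add: iso_def bij_betw_def)
  then have "e (f x) \<noteq> e (f y)"
    using assms(3,5-7) by (auto simp: inj_on_def hom_in_carrier)
  moreover have "e \<circ> f \<in> hom M F" using hom_compose[OF assms(3) iso_imp_homomorphism[OF F(3)]] .
  ultimately show ?thesis using F assms(4) by (intro exI[of _ F] exI[of _ "e \<circ> f"]) auto
qed

lemma separation_by_nat_group:
  assumes "group K" "finite (carrier K)" "f \<in> hom M K"
    and "x \<in> carrier M" "y \<in> carrier M" "f x \<noteq> f y"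
  shows "\<exists>(F :: nat monoid) f. group F \<and> finite (carrier F) \<and> f \<in> hom M F \<and> f x \<noteq> f y"
proof -
  obtain F :: "nat monoid" and e where F: "group F" "finite (carrier F)" "e \<in> iso K F"
    using finite_monoid_nat_copy[OF group.is_monoid[OF assms(1)] assms(2)] assms(1) by metis
  have "inj_on e (carrier K)" using F(3) by (simp add: iso_def bij_betw_def)
  then have "e (f x) \<noteq> e (f y)"
    using assms(3-6) by (auto simp: inj_on_def hom_in_carrier)
  moreover have "e \<circ> f \<in> hom M F" using hom_compose[OF assms(3) iso_imp_homomorphism[OF F(3)]] .
  ultimately show ?thesis using F by (intro exI[of _ F] exI[of _ "e \<circ> f"]) auto
qed

text \<open>The trivial group, used to separate elements that already differ in their shape.\<close>

definition trivial_nat_group :: "nat monoid" where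
  "trivial_nat_group = \<lparr>carrier = {0}, mult = (\<lambda>_ _. 0), one = 0\<rparr>"

lemma trivial_quotient: "group trivial_nat_group" "finite (carrier trivial_nat_group)"
  "(\<lambda>_. 0) \<in> hom G trivial_nat_group"
  unfolding trivial_nat_group_def by (auto intro: groupI simp: hom_def)

lemma monoid_res_finite_embedding:
  assumes hom: "\<Phi> \<in> hom A B" and inj: "inj_on \<Phi> (carrier A)" and one: "\<Phi> \<one>\<^bsub>A\<^esub> = \<one>\<^bsub>B\<^esub>"
    and rf: "monoid_res_finite B"
  shows "monoid_res_finite A"
  unfolding monoid_res_finite_def
proof (intro ballI impI)
  fix x y assume xy: "x \<in> carrier A" "y \<in> carrier A" "x \<noteq> y"
  then have "\<Phi> x \<noteq> \<Phi> y" "\<Phi> x \<in> carrier B" "\<Phi> y \<in> carrier B"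
    using inj hom by (auto simp: inj_on_def hom_in_carrier)
  then obtain F :: "nat monoid" and f where F: "monoid F" "finite (carrier F)" "f \<in> hom B F"
      "f \<one>\<^bsub>B\<^esub> = \<one>\<^bsub>F\<^esub>" "f (\<Phi> x) \<noteq> f (\<Phi> y)"
    using rf unfolding monoid_res_finite_def by blast
  then show "\<exists>(F :: nat monoid) f. monoid F \<and> finite (carrier F) \<and> f \<in> hom A F
            \<and> f \<one>\<^bsub>A\<^esub> = \<one>\<^bsub>F\<^esub> \<and> f x \<noteq> f y"
    using hom_compose[OF hom F(3)] one by (intro exI[of _ F] exI[of _ "f \<circ> \<Phi>"]) auto
qed

text \<open>An isomorphism maps principal left ideals onto principal left ideals, hence it
  preserves and reflects Green's relation \<open>\<L>\<close>.\<close>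

lemma greenL_iso:
  assumes A: "monoid A" and iso: "\<Phi> \<in> iso A B" and x: "x \<in> carrier A" and y: "y \<in> carrier A"
  shows "(\<Phi> x, \<Phi> y) \<in> greenL B \<longleftrightarrow> (x, y) \<in> greenL A"
proof -
  have hom: "\<Phi> \<in> hom A B" and inj: "inj_on \<Phi> (carrier A)" and sur: "\<Phi> ` carrier A = carrier B"
    using iso by (auto simp: iso_def bij_betw_def)
  have ideal: "(\<lambda>m. m \<otimes>\<^bsub>B\<^esub> \<Phi> z) ` carrier B = \<Phi> ` ((\<lambda>m. m \<otimes>\<^bsub>A\<^esub> z) ` carrier A)"
    if z: "z \<in> carrier A" for z
  proof -
    have "(\<lambda>m. m \<otimes>\<^bsub>B\<^esub> \<Phi> z) ` carrier B = (\<lambda>m. \<Phi> m \<otimes>\<^bsub>B\<^esub> \<Phi> z) ` carrier A"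
      by (simp add: sur[symmetric] image_image)
    also have "\<dots> = (\<lambda>m. \<Phi> (m \<otimes>\<^bsub>A\<^esub> z)) ` carrier A"
      using hom z by (intro image_cong) (auto simp: hom_mult)
    finally show ?thesis by (simp add: image_image)
  qed
  have sub: "(\<lambda>m. m \<otimes>\<^bsub>A\<^esub> z) ` carrier A \<subseteq> carrier A" if "z \<in> carrier A" for z
    using A that by (auto simp: monoid.m_closed)
  show ?thesis
    unfolding greenL_def
    using ideal[OF x] ideal[OF y] inj_on_image_eq_iff[OF inj sub[OF x] sub[OF y]] x y hom
    by (auto simp: hom_in_carrier)
qed

text \<open>A right congruence of finite index containing \<open>\<L>\<close> can be pulled back along an
  isomorphism; hence residual finiteness of the action on \<open>\<L>\<close>-classes is
  isomorphism invariant.\<close>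

lemma L_action_res_finite_iso:
  assumes A: "monoid A" and iso: "\<Phi> \<in> iso A B" and rf: "L_action_res_finite B"
  shows "L_action_res_finite A"
  unfolding L_action_res_finite_def
proof (intro ballI impI)
  fix s t assume s: "s \<in> carrier A" and t: "t \<in> carrier A" and st: "(s, t) \<notin> greenL A"
  have hom: "\<Phi> \<in> hom A B" using iso by (simp add: iso_def)
  have PhiC: "\<And>x. x \<in> carrier A \<Longrightarrow> \<Phi> x \<in> carrier B" using hom by (simp add: hom_in_carrier)
  have "(\<Phi> s, \<Phi> t) \<notin> greenL B" using greenL_iso[OF A iso s t] st by simp
  then obtain \<rho> where rho: "right_congruence B \<rho>" "finite (carrier B // \<rho>)" "greenL B \<subseteq> \<rho>"
    "(\<Phi> s, \<Phi> t) \<notin> \<rho>"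
    using rf PhiC[OF s] PhiC[OF t] unfolding L_action_res_finite_def by blast
  have eq: "equiv (carrier B) \<rho>"
    and comp: "\<And>s t m. (s, t) \<in> \<rho> \<Longrightarrow> m \<in> carrier B \<Longrightarrow> (s \<otimes>\<^bsub>B\<^esub> m, t \<otimes>\<^bsub>B\<^esub> m) \<in> \<rho>"
    using rho(1) unfolding right_congruence_def by auto
  define \<sigma> where "\<sigma> = {(x, y). x \<in> carrier A \<and> y \<in> carrier A \<and> (\<Phi> x, \<Phi> y) \<in> \<rho>}"
  have "equiv (carrier A) \<sigma>"
    using eq PhiC unfolding \<sigma>_def equiv_def refl_on_def sym_def trans_def by blast
  then have rc: "right_congruence A \<sigma>"
    using comp PhiC A hom unfolding right_congruence_def \<sigma>_def
    by (auto simp: monoid.m_closed hom_mult)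
  have "carrier A // \<sigma> \<subseteq> (\<lambda>C. {y \<in> carrier A. \<Phi> y \<in> C}) ` (carrier B // \<rho>)"
  proof
    fix X assume "X \<in> carrier A // \<sigma>"
    then obtain x where x: "x \<in> carrier A" "X = \<sigma> `` {x}" by (auto elim: quotientE)
    then have "X = {y \<in> carrier A. \<Phi> y \<in> \<rho> `` {\<Phi> x}}" by (auto simp: \<sigma>_def)
    moreover have "\<rho> `` {\<Phi> x} \<in> carrier B // \<rho>" using PhiC[OF x(1)] by (rule quotientI)
    ultimately show "X \<in> (\<lambda>C. {y \<in> carrier A. \<Phi> y \<in> C}) ` (carrier B // \<rho>)" by blast
  qed
  then have fin: "finite (carrier A // \<sigma>)" using rho(2) by (meson finite_imageI finite_subset)
  have "greenL A \<subseteq> \<sigma>"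
  proof (clarify)
    fix x y assume "(x, y) \<in> greenL A"
    moreover from this have "x \<in> carrier A" "y \<in> carrier A" by (auto simp: greenL_def)
    ultimately show "(x, y) \<in> \<sigma>" using greenL_iso[OF A iso] rho(3) by (auto simp: \<sigma>_def)
  qed
  moreover have "(s, t) \<notin> \<sigma>" using rho(4) by (simp add: \<sigma>_def)
  ultimately show "\<exists>\<rho>. right_congruence A \<rho> \<and> finite (carrier A // \<rho>) \<and> greenL A \<subseteq> \<rho> \<and> (s, t) \<notin> \<rho>"
    using rc fin by blast
qed

lemma res_finite_iso_invariant:
  assumes A: "monoid A" and iso: "\<Phi> \<in> iso A B" and one: "\<Phi> \<one>\<^bsub>A\<^esub> = \<one>\<^bsub>B\<^esub>"
  shows "monoid_res_finite A \<longleftrightarrow> monoid_res_finite B"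
    and "L_action_res_finite A \<longleftrightarrow> L_action_res_finite B"
proof -
  let ?\<Psi> = "inv_into (carrier A) \<Phi>"
  have hom: "\<Phi> \<in> hom A B" and inj: "inj_on \<Phi> (carrier A)" and sur: "\<Phi> ` carrier A = carrier B"
    using iso by (auto simp: iso_def bij_betw_def)
  have B: "monoid B" by (rule monoid_by_surjective_hom[OF A hom sur one])
  have iso': "?\<Psi> \<in> iso B A" by (rule monoid_iso_inverse[OF A iso])
  have one': "?\<Psi> \<one>\<^bsub>B\<^esub> = \<one>\<^bsub>A\<^esub>"
    using inv_into_f_f[OF inj monoid.one_closed[OF A]] one by simp
  show "monoid_res_finite A \<longleftrightarrow> monoid_res_finite B"
    using monoid_res_finite_embedding[OF hom inj one]
      monoid_res_finite_embedding[of ?\<Psi> B A] iso' one' by (auto simp: iso_def bij_betw_def)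
  show "L_action_res_finite A \<longleftrightarrow> L_action_res_finite B"
    using L_action_res_finite_iso[OF A iso] L_action_res_finite_iso[OF B iso'] by blast
qed

lemma greenL_iff:
  assumes M: "monoid M" and x: "x \<in> carrier M" and y: "y \<in> carrier M"
  shows "(x, y) \<in> greenL M \<longleftrightarrow>
    (\<exists>a\<in>carrier M. x = a \<otimes>\<^bsub>M\<^esub> y) \<and> (\<exists>b\<in>carrier M. y = b \<otimes>\<^bsub>M\<^esub> x)"
proof -
  interpret monoid M by (rule M)
  have ideal_sub: "(\<lambda>m. m \<otimes>\<^bsub>M\<^esub> u) ` carrier M \<subseteq> (\<lambda>m. m \<otimes>\<^bsub>M\<^esub> v) ` carrier M"
    if "a \<in> carrier M" "u = a \<otimes>\<^bsub>M\<^esub> v" "v \<in> carrier M" for u v a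
  proof
    fix z assume "z \<in> (\<lambda>m. m \<otimes>\<^bsub>M\<^esub> u) ` carrier M"
    then obtain m where "m \<in> carrier M" "z = m \<otimes>\<^bsub>M\<^esub> u" by blast
    then show "z \<in> (\<lambda>m. m \<otimes>\<^bsub>M\<^esub> v) ` carrier M"
      using that by (intro image_eqI[of _ _ "m \<otimes>\<^bsub>M\<^esub> a"]) (auto simp: m_assoc)
  qed
  have self: "u \<in> (\<lambda>m. m \<otimes>\<^bsub>M\<^esub> u) ` carrier M" if "u \<in> carrier M" for u
    using that by (intro image_eqI[of _ _ "\<one>\<^bsub>M\<^esub>"]) auto
  show ?thesis
    unfolding greenL_def using x y self[OF x] self[OF y] ideal_sub by blast
qed

lemma kernel_right_congruence:
  assumes compat: "\<And>x y m. x \<in> carrier M \<Longrightarrow> y \<in> carrier M \<Longrightarrow> m \<in> carrier M \<Longrightarrow>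
      \<kappa> x = \<kappa> y \<Longrightarrow> \<kappa> (x \<otimes>\<^bsub>M\<^esub> m) = \<kappa> (y \<otimes>\<^bsub>M\<^esub> m)"
    and closed: "\<And>x m. x \<in> carrier M \<Longrightarrow> m \<in> carrier M \<Longrightarrow> x \<otimes>\<^bsub>M\<^esub> m \<in> carrier M"
    and fin: "finite (\<kappa> ` carrier M)"
  defines "\<rho> \<equiv> {(x, y). x \<in> carrier M \<and> y \<in> carrier M \<and> \<kappa> x = \<kappa> y}"
  shows "right_congruence M \<rho>" and "finite (carrier M // \<rho>)"
proof -
  show "right_congruence M \<rho>"
    unfolding right_congruence_def \<rho>_def equiv_def refl_on_def sym_def trans_def
    using compat closed by auto
  have "carrier M // \<rho> \<subseteq> (\<lambda>v. {y \<in> carrier M. \<kappa> y = v}) ` (\<kappa> ` carrier M)"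
  proof
    fix X assume "X \<in> carrier M // \<rho>"
    then obtain x where "x \<in> carrier M" "X = {y \<in> carrier M. \<kappa> x = \<kappa> y}"
      by (auto simp: \<rho>_def elim!: quotientE)
    then show "X \<in> (\<lambda>v. {y \<in> carrier M. \<kappa> y = v}) ` (\<kappa> ` carrier M)"
      by (intro image_eqI[of _ _ "\<kappa> x"]) auto
  qed
  then show "finite (carrier M // \<rho>)" using fin by (meson finite_imageI finite_subset)
qed

definition class_act :: "('a, 'b) monoid_scheme \<Rightarrow> ('a \<times> 'a) set \<Rightarrow> 'a set \<Rightarrow> 'a \<Rightarrow> 'a set" where
  "class_act M \<rho> q m = \<rho> `` ((\<lambda>x. x \<otimes>\<^bsub>M\<^esub> m) ` q)"

lemma class_act_class:
  assumes rc: "right_congruence M \<rho>" and x: "x \<in> carrier M" and m: "m \<in> carrier M"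
  shows "class_act M \<rho> (\<rho> `` {x}) m = \<rho> `` {x \<otimes>\<^bsub>M\<^esub> m}"
proof -
  have eq: "equiv (carrier M) \<rho>"
    and comp: "\<And>y. (x, y) \<in> \<rho> \<Longrightarrow> (x \<otimes>\<^bsub>M\<^esub> m, y \<otimes>\<^bsub>M\<^esub> m) \<in> \<rho>"
    using rc m unfolding right_congruence_def by auto
  have "\<rho> `` {y \<otimes>\<^bsub>M\<^esub> m} = \<rho> `` {x \<otimes>\<^bsub>M\<^esub> m}" if "(x, y) \<in> \<rho>" for y
    using equiv_class_eq[OF eq comp[OF that]] by simp
  moreover have "x \<in> \<rho> `` {x}" using eq x by (rule equiv_class_self)
  ultimately show ?thesis
    unfolding class_act_def by blast
qed

text \<open>A group \<open>K\<close> acting on the right on a finite set \<open>Q\<close> maps into the finite group of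
  permutations of \<open>Q\<close>; so any two elements acting differently on some point are separated
  by a homomorphism to a finite group.\<close>

lemma finite_action_separation:
  assumes K: "group K" and Q: "finite Q"
    and closed: "\<And>q c. q \<in> Q \<Longrightarrow> c \<in> carrier K \<Longrightarrow> act q c \<in> Q"
    and unit: "\<And>q. q \<in> Q \<Longrightarrow> act q \<one>\<^bsub>K\<^esub> = q"
    and comp: "\<And>q c d. q \<in> Q \<Longrightarrow> c \<in> carrier K \<Longrightarrow> d \<in> carrier K \<Longrightarrow>
                 act (act q c) d = act q (c \<otimes>\<^bsub>K\<^esub> d)"
    and q: "q \<in> Q" and cd: "c \<in> carrier K" "d \<in> carrier K" and ne: "act q c \<noteq> act q d"
  shows "\<exists>(F :: nat monoid) f. group F \<and> finite (carrier F) \<and> f \<in> hom K F \<and> f c \<noteq> f d"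
proof -
  interpret K: group K by (rule K)
  define \<Psi> where "\<Psi> c = (\<lambda>q\<in>Q. act q (inv\<^bsub>K\<^esub> c))" for c
  have cancel: "act (act q (inv\<^bsub>K\<^esub> c)) c = q" "act (act q c) (inv\<^bsub>K\<^esub> c) = q"
    if "q \<in> Q" "c \<in> carrier K" for q c
    using that comp unit by auto
  have bij: "\<Psi> c \<in> Bij Q" if c: "c \<in> carrier K" for c
  proof -
    have "bij_betw (\<Psi> c) Q Q"
      by (rule bij_betw_byWitness[where f' = "\<Psi> (inv\<^bsub>K\<^esub> c)"])
         (use c closed cancel in \<open>auto simp: \<Psi>_def\<close>)
    then show ?thesis by (simp add: Bij_def \<Psi>_def)
  qed
  have hom: "\<Psi> \<in> hom K (BijGroup Q)"
  proof (rule homI)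
    show "\<Psi> c \<in> carrier (BijGroup Q)" if "c \<in> carrier K" for c
      using bij that by (simp add: BijGroup_def)
    show "\<Psi> (c \<otimes>\<^bsub>K\<^esub> d) = \<Psi> c \<otimes>\<^bsub>BijGroup Q\<^esub> \<Psi> d" if "c \<in> carrier K" "d \<in> carrier K" for c d
      using bij that closed comp
      by (auto simp: BijGroup_def \<Psi>_def compose_def K.inv_mult_group intro!: ext)
  qed
  have "carrier (BijGroup Q) \<subseteq> Q \<rightarrow>\<^sub>E Q"
    by (auto simp: BijGroup_def Bij_def bij_betw_def PiE_def)
  then have fin: "finite (carrier (BijGroup Q))"
    using Q by (meson finite_PiE finite_subset)
  have "\<Psi> c (act q c) = q" using q cd closed cancel by (simp add: \<Psi>_def)
  moreover have "\<Psi> d (act q c) \<noteq> q"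
  proof
    assume "\<Psi> d (act q c) = q"
    then have "act (\<Psi> d (act q c)) d = act q d" by simp
    then show False using ne q cd closed cancel by (simp add: \<Psi>_def)
  qed
  ultimately have "\<Psi> c \<noteq> \<Psi> d" by metis
  then show ?thesis using separation_by_nat_group[OF group_BijGroup fin hom cd] by blast
qed

section \<open>A normal-form model of \<open>\<M>(G,N)\<close>\<close>

text \<open>The elements of \<open>\<M>(G,N)\<close> are \<open>1\<close>, \<open>0\<close>, the elements \<open>g\<close> of \<open>G\<close>, the elements
  \<open>n\<close> of \<open>N\<close>, and the products \<open>hg\<close> (\<open>g \<in> G\<close>); the relations give
  \<open>n \<cdot> hg = h(ng)\<close>, \<open>hg \<cdot> g' = h(gg')\<close>, and all other mixed products are \<open>0\<close>.\<close>

datatype 'g melem = One | Zero | Gel 'g | Nbar 'g | Hel 'g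

fun model_mult :: "('g, 'b) monoid_scheme \<Rightarrow> 'g melem \<Rightarrow> 'g melem \<Rightarrow> 'g melem" where
  "model_mult G One y = y"
| "model_mult G x One = x"
| "model_mult G (Gel a) (Gel b) = Gel (a \<otimes>\<^bsub>G\<^esub> b)"
| "model_mult G (Nbar a) (Nbar b) = Nbar (a \<otimes>\<^bsub>G\<^esub> b)"
| "model_mult G (Nbar a) (Hel b) = Hel (a \<otimes>\<^bsub>G\<^esub> b)"
| "model_mult G (Hel a) (Gel b) = Hel (a \<otimes>\<^bsub>G\<^esub> b)"
| "model_mult G x y = Zero"

definition model_carrier :: "('g, 'b) monoid_scheme \<Rightarrow> 'g set \<Rightarrow> 'g melem set" where
  "model_carrier G N = {One, Zero} \<union> Gel ` carrier G \<union> Nbar ` N \<union> Hel ` carrier G"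

definition model :: "('g, 'b) monoid_scheme \<Rightarrow> 'g set \<Rightarrow> 'g melem monoid" where
  "model G N = \<lparr>carrier = model_carrier G N, mult = model_mult G, one = One\<rparr>"

lemma model_carrier_cases [consumes 1, case_names One Zero Gel Nbar Hel]:
  assumes "x \<in> model_carrier G N"
  obtains "x = One" | "x = Zero" | a where "a \<in> carrier G" "x = Gel a"
    | a where "a \<in> N" "x = Nbar a" | a where "a \<in> carrier G" "x = Hel a"
  using assms unfolding model_carrier_def by blast

lemma model_carrier_simps [simp]:
  "One \<in> model_carrier G N" "Zero \<in> model_carrier G N"
  "Gel a \<in> model_carrier G N \<longleftrightarrow> a \<in> carrier G"
  "Nbar a \<in> model_carrier G N \<longleftrightarrow> a \<in> N" "Hel a \<in> model_carrier G N \<longleftrightarrow> a \<in> carrier G"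
  by (auto simp: model_carrier_def)

lemma model_mult_simps [simp]:
  "model_mult G x Zero = Zero" "model_mult G Zero x = Zero" "model_mult G x One = x"
  by (cases x; simp)+

lemma model_simps [simp]:
  "carrier (model G N) = model_carrier G N" "mult (model G N) = model_mult G"
  "one (model G N) = One"
  by (simp_all add: model_def)

lemma model_monoid:
  assumes "monoid G" "N \<subseteq> carrier G" "\<And>a b. a \<in> N \<Longrightarrow> b \<in> N \<Longrightarrow> a \<otimes>\<^bsub>G\<^esub> b \<in> N"
  shows "monoid (model G N)"
proof -
  interpret monoid G by fact
  have closed: "model_mult G x y \<in> model_carrier G N"
    if "x \<in> model_carrier G N" "y \<in> model_carrier G N" for x y
    using that assms(2,3)
    by (cases rule: model_carrier_cases[OF that(1)]; cases rule: model_carrier_cases[OF that(2)])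
       auto
  have assoc: "model_mult G (model_mult G x y) z = model_mult G x (model_mult G y z)"
    if "x \<in> model_carrier G N" "y \<in> model_carrier G N" "z \<in> model_carrier G N" for x y z
    using that assms(2)
    by (cases rule: model_carrier_cases[OF that(1)]; cases rule: model_carrier_cases[OF that(2)];
        cases rule: model_carrier_cases[OF that(3)]) (auto simp: m_assoc subsetD)
  show ?thesis
    by (rule monoidI) (auto simp: closed assoc)
qed

lemma model_map_hom:
  assumes "\<phi> \<in> hom G K" "N \<subseteq> carrier G"
  shows "map_melem \<phi> \<in> hom (model G N) (model K (\<phi> ` N))"
proof (rule homI)
  fix x y assume "x \<in> carrier (model G N)" and "y \<in> carrier (model G N)"
  then have x: "x \<in> model_carrier G N" and y: "y \<in> model_carrier G N" by simp_all
  show "map_melem \<phi> x \<in> carrier (model K (\<phi> ` N))"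
    using x assms by (cases rule: model_carrier_cases[OF x]) (auto simp: hom_in_carrier)
  show "map_melem \<phi> (x \<otimes>\<^bsub>model G N\<^esub> y) = map_melem \<phi> x \<otimes>\<^bsub>model K (\<phi> ` N)\<^esub> map_melem \<phi> y"
    using x y assms
    by (cases rule: model_carrier_cases[OF x]; cases rule: model_carrier_cases[OF y])
       (auto simp: hom_mult subsetD)
qed

lemma finite_model: "finite (carrier G) \<Longrightarrow> N \<subseteq> carrier G \<Longrightarrow> finite (carrier (model G N))"
  by (simp add: model_carrier_def finite_subset)

lemma model_distinct_cases:
  assumes "x \<in> model_carrier G N" "y \<in> model_carrier G N" "x \<noteq> y" "N \<subseteq> carrier G"
  obtains "\<And>\<phi>. map_melem \<phi> x \<noteq> map_melem \<phi> y"
    | a b where "a \<in> carrier G" "b \<in> carrier G" "a \<noteq> b"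
        "\<And>\<phi>. \<phi> a \<noteq> \<phi> b \<Longrightarrow> map_melem \<phi> x \<noteq> map_melem \<phi> y"
  using assms
  by (cases rule: model_carrier_cases[OF assms(1)]; cases rule: model_carrier_cases[OF assms(2)])
     (auto dest: subsetD)

text \<open>From here on the subgroup \<open>N\<close> of the theorem is called \<open>H\<close>, following the
  library's locales.\<close>

locale subgroup_of_group = subgroup H G + group G for H and G (structure)

sublocale normal \<subseteq> subgroup_of_group ..

context subgroup_of_group
begin

abbreviation "Alph \<equiv> MGN_alph G H"
abbreviation "Rels \<equiv> MGN_rels G H"
abbreviation "peq \<equiv> pres_eq Alph Rels"

lemma alph_simps [simp]:
  "GE g \<in> Alph \<longleftrightarrow> g \<in> carrier G" "NB g \<in> Alph \<longleftrightarrow> g \<in> H" "Hgen \<in> Alph" "Zgen \<in> Alph"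
  by (auto simp: MGN_alph_def)

lemma model_is_monoid: "monoid (model G H)"
  by (rule model_monoid) (auto simp: is_monoid subset)

fun eval_gen :: "'a gen \<Rightarrow> 'a melem" where
  "eval_gen (GE g) = Gel g" | "eval_gen (NB n) = Nbar n" | "eval_gen Hgen = Hel \<one>"
| "eval_gen Zgen = Zero"

fun eval_word :: "'a gen list \<Rightarrow> 'a melem" where
  "eval_word [] = One" | "eval_word (a # w) = model_mult G (eval_gen a) (eval_word w)"

fun nf_word :: "'a melem \<Rightarrow> 'a gen list" where
  "nf_word One = []" | "nf_word Zero = [Zgen]" | "nf_word (Gel g) = [GE g]"
| "nf_word (Nbar n) = [NB n]" | "nf_word (Hel g) = [Hgen, GE g]"

lemma eval_gen_in: "a \<in> Alph \<Longrightarrow> eval_gen a \<in> model_carrier G H"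
  by (cases a) (auto simp: MGN_alph_def)

lemma eval_word_in: "w \<in> lists Alph \<Longrightarrow> eval_word w \<in> model_carrier G H"
  by (induction w) (auto simp: eval_gen_in monoid.m_closed[OF model_is_monoid, simplified])

lemma eval_word_append:
  "u \<in> lists Alph \<Longrightarrow> v \<in> lists Alph \<Longrightarrow>
    eval_word (u @ v) = model_mult G (eval_word u) (eval_word v)"
proof (induction u)
  case (Cons a u)
  then show ?case
    using eval_gen_in eval_word_in monoid.m_assoc[OF model_is_monoid] by auto
qed simp

lemma nf_word_in: "x \<in> model_carrier G H \<Longrightarrow> nf_word x \<in> lists Alph"
  by (cases rule: model_carrier_cases) auto

lemma eval_nf_word: "x \<in> model_carrier G H \<Longrightarrow> eval_word (nf_word x) = x"
  by (cases rule: model_carrier_cases) auto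

lemma rels_in_lists: "(l, r) \<in> Rels \<Longrightarrow> l \<in> lists Alph \<and> r \<in> lists Alph"
  by (auto simp: MGN_rels_def subsetD[OF subset] m_closed)

lemma eval_rels: "(l, r) \<in> Rels \<Longrightarrow> eval_word l = eval_word r"
  by (auto simp: MGN_rels_def subsetD[OF subset])

lemma pres_eq_lists: "peq w w' \<Longrightarrow> w \<in> lists Alph \<and> w' \<in> lists Alph"
  by (induction rule: pres_eq.induct) (auto dest: rels_in_lists)

lemma eval_word_pres_eq: "peq w w' \<Longrightarrow> eval_word w = eval_word w'"
proof (induction rule: pres_eq.induct)
  case (pres_rel l r u v)
  then show ?case using rels_in_lists eval_rels by (simp add: eval_word_append)
qed auto

lemmas peq_trans [trans] = pres_eq.pres_trans[of Alph Rels]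

lemma peq_refl: "w \<in> lists Alph \<Longrightarrow> peq w w"
  by (rule pres_eq.pres_refl)

lemma peq_rel:
  assumes "(l, r) \<in> Rels"
  shows "peq l r" and "peq r l"
  using pres_eq.pres_rel[OF assms, where u="[]" and v="[]"] rels_in_lists[OF assms]
  by (auto intro: pres_eq.pres_sym)

lemma peq_context:
  "peq w w' \<Longrightarrow> u \<in> lists Alph \<Longrightarrow> v \<in> lists Alph \<Longrightarrow> peq (u @ w @ v) (u @ w' @ v)"
proof (induction rule: pres_eq.induct)
  case (pres_refl w)
  then show ?case by (intro pres_eq.pres_refl) auto
next
  case (pres_rel l r u' v')
  then show ?case
    using pres_eq.pres_rel[where A=Alph and R=Rels and l=l and r=r and u="u @ u'" and v="v' @ v"]
    by simp
qed (auto intro: pres_eq.pres_sym pres_eq.pres_trans)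

lemma peq_basic:
  "g \<in> carrier G \<Longrightarrow> b \<in> carrier G \<Longrightarrow> peq [GE g, GE b] [GE (g \<otimes> b)]"
  "n \<in> H \<Longrightarrow> m \<in> H \<Longrightarrow> peq [NB n, NB m] [NB (n \<otimes> m)]"
  "x \<in> Alph \<Longrightarrow> peq [x, Zgen] [Zgen]"
  "x \<in> Alph \<Longrightarrow> peq [Zgen, x] [Zgen]"
  "g \<in> carrier G \<Longrightarrow> n \<in> H \<Longrightarrow> peq [GE g, NB n] [Zgen]"
  "g \<in> carrier G \<Longrightarrow> n \<in> H \<Longrightarrow> peq [NB n, GE g] [Zgen]"
  "g \<in> carrier G \<Longrightarrow> peq [GE g, Hgen] [Zgen]"
  "n \<in> H \<Longrightarrow> peq [Hgen, NB n] [Zgen]"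
  "n \<in> H \<Longrightarrow> peq [NB n, Hgen] [Hgen, GE n]"
  "peq [Hgen] [Hgen, GE \<one>]"
  "peq [Hgen] [NB \<one>, Hgen]"
  by (rule peq_rel; simp add: MGN_rels_def)+

lemma peq_derived:
  "b \<in> carrier G \<Longrightarrow> peq [Zgen, Hgen, GE b] [Zgen]"
  "g \<in> carrier G \<Longrightarrow> b \<in> carrier G \<Longrightarrow> peq [GE g, Hgen, GE b] [Zgen]"
  "n \<in> H \<Longrightarrow> b \<in> carrier G \<Longrightarrow> peq [NB n, Hgen, GE b] [Hgen, GE (n \<otimes> b)]"
  "b \<in> carrier G \<Longrightarrow> peq [Hgen, Hgen, GE b] [Zgen]"
proof -
  have zero_b: "peq [Zgen, GE b] [Zgen]" if "b \<in> carrier G" for b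
    using peq_basic(4) that by simp
  show zero_h_b: "peq [Zgen, Hgen, GE b] [Zgen]" if b: "b \<in> carrier G" for b
  proof -
    have "peq [Zgen, Hgen, GE b] [Zgen, GE b]"
      using peq_context[OF peq_basic(4)[of Hgen], of "[]" "[GE b]"] b by simp
    also have "peq \<dots> [Zgen]" by (rule zero_b[OF b])
    finally show ?thesis .
  qed
  show "peq [GE g, Hgen, GE b] [Zgen]" if g: "g \<in> carrier G" and b: "b \<in> carrier G" for g b
  proof -
    have "peq [GE g, Hgen, GE b] [Zgen, GE b]"
      using peq_context[OF peq_basic(7)[OF g], of "[]" "[GE b]"] b by simp
    also have "peq \<dots> [Zgen]" by (rule zero_b[OF b])
    finally show ?thesis .
  qed
  show "peq [NB n, Hgen, GE b] [Hgen, GE (n \<otimes> b)]" if n: "n \<in> H" and b: "b \<in> carrier G" for n b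
  proof -
    have n': "n \<in> carrier G" using n subset by blast
    have "peq [NB n, Hgen, GE b] [Hgen, GE n, GE b]"
      using peq_context[OF peq_basic(9)[OF n], of "[]" "[GE b]"] b by simp
    also have "peq \<dots> [Hgen, GE (n \<otimes> b)]"
      using peq_context[OF peq_basic(1)[OF n' b], of "[Hgen]" "[]"] by simp
    finally show ?thesis .
  qed
  show "peq [Hgen, Hgen, GE b] [Zgen]" if b: "b \<in> carrier G" for b
  proof -
    have "peq [Hgen, Hgen, GE b] [Hgen, NB \<one>, Hgen, GE b]"
      using peq_context[OF peq_basic(11), of "[Hgen]" "[GE b]"] b by simp
    also have "peq \<dots> [Zgen, Hgen, GE b]"
      using peq_context[OF peq_basic(8)[of \<one>], of "[]" "[Hgen, GE b]"] b by simp
    also have "peq \<dots> [Zgen]" by (rule zero_h_b[OF b])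
    finally show ?thesis .
  qed
qed

lemma peq_prepend_generator:
  assumes a: "a \<in> Alph" and x: "x \<in> model_carrier G H"
  shows "peq (a # nf_word x) (nf_word (model_mult G (eval_gen a) x))"
proof -
  have H: "n \<in> H \<Longrightarrow> n \<in> carrier G" for n using subset by blast
  show ?thesis
    using x a
    by (cases rule: model_carrier_cases; cases a)
       (auto simp: peq_basic peq_derived H peq_refl)
qed

lemma peq_nf_word: "w \<in> lists Alph \<Longrightarrow> peq w (nf_word (eval_word w))"
proof (induction w)
  case (Cons a w)
  then have a: "a \<in> Alph" and w: "w \<in> lists Alph" by auto
  have "peq (a # w) (a # nf_word (eval_word w))"
    using peq_context[OF Cons.IH[OF w], of "[a]" "[]"] a by simp
  also have "peq \<dots> (nf_word (eval_word (a # w)))"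
    using peq_prepend_generator[OF a eval_word_in[OF w]] by simp
  finally show ?case .
qed (simp add: peq_refl)

lemma pres_class_eq_iff:
  assumes "w \<in> lists Alph" "w' \<in> lists Alph"
  shows "pres_class Alph Rels w = pres_class Alph Rels w' \<longleftrightarrow> peq w w'"
proof
  assume "pres_class Alph Rels w = pres_class Alph Rels w'"
  moreover have "w' \<in> pres_class Alph Rels w'" using assms(2) by (simp add: pres_class_def peq_refl)
  ultimately show "peq w w'" by (auto simp: pres_class_def)
next
  assume "peq w w'"
  then show "pres_class Alph Rels w = pres_class Alph Rels w'"
    unfolding pres_class_def by (auto intro: pres_eq.pres_trans pres_eq.pres_sym)
qed

lemma MGN_mult_class:
  assumes u: "u \<in> lists Alph" and v: "v \<in> lists Alph"
  shows "pres_class Alph Rels u \<otimes>\<^bsub>MGN G H\<^esub> pres_class Alph Rels v = pres_class Alph Rels (u @ v)"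
proof -
  have "peq (u @ v) w" if "peq u x" "peq v y" "peq (x @ y) w" for x y w
  proof -
    have x: "x \<in> lists Alph" using pres_eq_lists that(1) by blast
    have "peq (u @ v) (x @ v)" using peq_context[OF that(1), of "[]" v] v by simp
    also have "peq \<dots> (x @ y)" using peq_context[OF that(2), of x "[]"] x by simp
    finally show ?thesis using that(3) by (rule peq_trans)
  qed
  moreover have "\<exists>x. peq u x \<and> (\<exists>y. peq v y \<and> peq (x @ y) w)" if "peq (u @ v) w" for w
    using that u v by (blast intro: peq_refl)
  ultimately show ?thesis
    unfolding MGN_def presented_monoid_def pres_class_def by auto
qed

definition to_MGN :: "'a melem \<Rightarrow> 'a gen list set" where
  "to_MGN x = pres_class Alph Rels (nf_word x)"

lemma carrier_MGN: "carrier (MGN G H) = pres_class Alph Rels ` lists Alph"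
  by (simp add: MGN_def presented_monoid_def)

text \<open>Soundness and completeness together say that \<open>to_MGN\<close> is a homomorphism \<dots>\<close>

lemma to_MGN_hom: "to_MGN \<in> hom (model G H) (MGN G H)"
proof (rule homI)
  fix x y assume "x \<in> carrier (model G H)" "y \<in> carrier (model G H)"
  then have x: "x \<in> model_carrier G H" and y: "y \<in> model_carrier G H" by simp_all
  show "to_MGN x \<in> carrier (MGN G H)" using x nf_word_in by (simp add: carrier_MGN to_MGN_def)
  have w: "nf_word x @ nf_word y \<in> lists Alph" using nf_word_in x y by simp
  have "eval_word (nf_word x @ nf_word y) = model_mult G x y"
    using eval_word_append nf_word_in eval_nf_word x y by simp
  then have "peq (nf_word x @ nf_word y) (nf_word (model_mult G x y))"
    using peq_nf_word[OF w] by simp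
  then have "pres_class Alph Rels (nf_word x @ nf_word y) = to_MGN (model_mult G x y)"
    using pres_class_eq_iff pres_eq_lists unfolding to_MGN_def by blast
  then show "to_MGN (x \<otimes>\<^bsub>model G H\<^esub> y) = to_MGN x \<otimes>\<^bsub>MGN G H\<^esub> to_MGN y"
    using MGN_mult_class nf_word_in x y by (simp add: to_MGN_def)
qed

text \<open>\<dots> which is injective (values of equivalent words agree) and surjective (every
  word is equivalent to a normal form).\<close>

lemma to_MGN_bij: "bij_betw to_MGN (carrier (model G H)) (carrier (MGN G H))"
proof -
  have "inj_on to_MGN (model_carrier G H)"
  proof (rule inj_onI)
    fix x y assume x: "x \<in> model_carrier G H" and y: "y \<in> model_carrier G H"
      and "to_MGN x = to_MGN y"
    then have "peq (nf_word x) (nf_word y)"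
      using pres_class_eq_iff nf_word_in by (simp add: to_MGN_def)
    then show "x = y" using eval_word_pres_eq eval_nf_word x y by metis
  qed
  moreover have "to_MGN ` model_carrier G H = pres_class Alph Rels ` lists Alph"
  proof (intro equalityI subsetI)
    fix X assume "X \<in> pres_class Alph Rels ` lists Alph"
    then obtain w where w: "w \<in> lists Alph" "X = pres_class Alph Rels w" by blast
    then have "X = to_MGN (eval_word w)"
      using peq_nf_word pres_class_eq_iff nf_word_in eval_word_in by (simp add: to_MGN_def)
    then show "X \<in> to_MGN ` model_carrier G H" using eval_word_in[OF w(1)] by blast
  qed (auto simp: to_MGN_def nf_word_in)
  ultimately show ?thesis by (simp add: bij_betw_def carrier_MGN)
qed

lemma to_MGN_iso: "to_MGN \<in> iso (model G H) (MGN G H)"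
  by (rule isoI[OF to_MGN_hom to_MGN_bij])

lemma to_MGN_one: "to_MGN \<one>\<^bsub>model G H\<^esub> = \<one>\<^bsub>MGN G H\<^esub>"
  by (simp add: to_MGN_def MGN_def presented_monoid_def)

lemma MGN_res_finite_iff_model:
  "monoid_res_finite (MGN G H) \<longleftrightarrow> monoid_res_finite (model G H)"
  "L_action_res_finite (MGN G H) \<longleftrightarrow> L_action_res_finite (model G H)"
  using res_finite_iso_invariant[OF model_is_monoid to_MGN_iso to_MGN_one] by simp_all

end

section \<open>Part (i): \<open>\<M>(G,N)\<close> is residually finite iff \<open>G\<close> is\<close>

context subgroup_of_group
begin

text \<open>\<open>G\<close> embeds into the model via \<open>g \<mapsto> g\<close>; the image of \<open>G\<close> under a
  homomorphism into a finite monoid is a finite group.\<close>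

lemma model_res_finite_imp_group: "monoid_res_finite (model G H) \<Longrightarrow> group_res_finite G"
  unfolding group_res_finite_def
proof (intro ballI impI)
  assume rf: "monoid_res_finite (model G H)"
  fix x y assume x: "x \<in> carrier G" and y: "y \<in> carrier G" and xy: "x \<noteq> y"
  then have "Gel x \<in> carrier (model G H)" "Gel y \<in> carrier (model G H)" "Gel x \<noteq> Gel y"
    by simp_all
  from rf[unfolded monoid_res_finite_def, rule_format, OF this]
  obtain F :: "nat monoid" and f where F: "f \<in> hom (model G H) F" "finite (carrier F)"
      "f (Gel x) \<noteq> f (Gel y)"
    by blast
  define \<psi> where "\<psi> g = f (Gel g)" for g
  have \<psi>: "\<psi> \<in> hom G F"
  proof (rule homI)
    fix g h assume "g \<in> carrier G" "h \<in> carrier G"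
    then show "\<psi> g \<in> carrier F" and "\<psi> (g \<otimes> h) = \<psi> g \<otimes>\<^bsub>F\<^esub> \<psi> h"
      using hom_in_carrier[OF F(1)] hom_mult[OF F(1), of "Gel g" "Gel h"] by (simp_all add: \<psi>_def)
  qed
  let ?K = "F\<lparr>carrier := \<psi> ` carrier G, one := \<psi> \<one>\<rparr>"
  have "group ?K" by (rule hom_imp_img_group[OF \<psi>])
  moreover have "\<psi> ` carrier G \<subseteq> carrier F" using \<psi> by (auto simp: hom_in_carrier)
  then have "finite (carrier ?K)" using F(2) by (simp add: finite_subset)
  moreover have "\<psi> \<in> hom G ?K" using \<psi> by (simp add: hom_def)
  moreover have "\<psi> x \<noteq> \<psi> y" using F(3) by (simp add: \<psi>_def)
  ultimately show "\<exists>(F :: nat monoid) f. group F \<and> finite (carrier F) \<and> f \<in> hom G F \<and> f x \<noteq> f y"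
    by blast
qed

text \<open>Conversely, a finite quotient \<open>\<phi> : G \<rightarrow> K\<close> separating the group components of two
  elements induces the finite quotient \<open>\<M>(K,\<phi>(N))\<close> of the model separating them.\<close>

lemma group_res_finite_imp_model: "group_res_finite G \<Longrightarrow> monoid_res_finite (model G H)"
  unfolding monoid_res_finite_def
proof (intro ballI impI)
  assume rf: "group_res_finite G"
  fix x y assume "x \<in> carrier (model G H)" "y \<in> carrier (model G H)" and xy: "x \<noteq> y"
  then have x: "x \<in> model_carrier G H" and y: "y \<in> model_carrier G H" by simp_all
  obtain K :: "nat monoid" and \<phi> where K: "group K" "finite (carrier K)" "\<phi> \<in> hom G K"
    and sep: "map_melem \<phi> x \<noteq> map_melem \<phi> y"
  proof (rule model_distinct_cases[OF x y xy subset])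
    assume "\<And>\<phi> :: _ \<Rightarrow> nat. map_melem \<phi> x \<noteq> map_melem \<phi> y"
    then show thesis by (rule that[OF trivial_quotient])
  next
    fix a b assume ab: "a \<in> carrier G" "b \<in> carrier G" "a \<noteq> b"
      and lift: "\<And>\<phi> :: _ \<Rightarrow> nat. \<phi> a \<noteq> \<phi> b \<Longrightarrow> map_melem \<phi> x \<noteq> map_melem \<phi> y"
    from rf[unfolded group_res_finite_def, rule_format, OF ab]
    obtain K :: "nat monoid" and \<phi> where "group K" "finite (carrier K)" "\<phi> \<in> hom G K" "\<phi> a \<noteq> \<phi> b"
      by blast
    then show thesis using that lift by blast
  qed
  interpret K: group K by (rule K(1))
  have NK: "\<phi> ` H \<subseteq> carrier K" using K(3) subset by (auto simp: hom_in_carrier)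
  have "\<phi> a \<otimes>\<^bsub>K\<^esub> \<phi> b \<in> \<phi> ` H" if "a \<in> H" "b \<in> H" for a b
  proof -
    have "\<phi> a \<otimes>\<^bsub>K\<^esub> \<phi> b = \<phi> (a \<otimes> b)" using hom_mult[OF K(3)] that subset by auto
    then show ?thesis using that by simp
  qed
  then have "monoid (model K (\<phi> ` H))" using NK by (intro model_monoid[OF K.is_monoid]) auto
  moreover have "finite (carrier (model K (\<phi> ` H)))" by (rule finite_model[OF K(2) NK])
  moreover have "map_melem \<phi> \<in> hom (model G H) (model K (\<phi> ` H))"
    by (rule model_map_hom[OF K(3) subset])
  ultimately show "\<exists>(F :: nat monoid) f. monoid F \<and> finite (carrier F) \<and> f \<in> hom (model G H) F
      \<and> f \<one>\<^bsub>model G H\<^esub> = \<one>\<^bsub>F\<^esub> \<and> f x \<noteq> f y"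
    by (rule separation_by_nat_monoid) (use sep x y in simp_all)
qed

end

section \<open>The \<open>\<L>\<close>-classes of \<open>\<M>(G,N)\<close>\<close>

text \<open>Left multiplication can only move \<open>hg\<close> inside \<open>h(Ng)\<close>, so the \<open>\<L>\<close>-classes are
  \<open>{1}\<close>, \<open>{0}\<close>, \<open>G\<close>, \<open>N\<close>, and the sets \<open>h(Ng)\<close> for the cosets \<open>Ng\<close>.\<close>

datatype 'c lclass = K1 | K0 | KG | KN | KH 'c

fun lclass_of :: "('g, 'b) monoid_scheme \<Rightarrow> 'g set \<Rightarrow> 'g melem \<Rightarrow> 'g set lclass" where
  "lclass_of G N One = K1" | "lclass_of G N Zero = K0" | "lclass_of G N (Gel a) = KG" | "lclass_of G N (Nbar a) = KN"
| "lclass_of G N (Hel a) = KH (N #>\<^bsub>G\<^esub> a)"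

lemma lclass_distinct_cases:
  assumes "k \<noteq> k'"
  obtains "\<And>\<phi>. map_lclass \<phi> k \<noteq> map_lclass \<phi> k'"
    | c d where "c \<noteq> d" "k = KH c" "k' = KH d"
  using assms by (cases k; cases k') auto

context subgroup_of_group
begin

lemma rcos_eq_iff:
  assumes "a \<in> carrier G" "b \<in> carrier G"
  shows "H #> a = H #> b \<longleftrightarrow> a \<otimes> inv b \<in> H"
proof
  assume "H #> a = H #> b"
  then have "a \<in> H #> b" using rcos_self[OF assms(1) subgroup_axioms] by simp
  then show "a \<otimes> inv b \<in> H" using rcos_module_imp[OF is_group assms(2)] by simp
next
  assume "a \<otimes> inv b \<in> H"
  then have "a \<in> H #> b" using rcos_module_rev[OF is_group assms(2,1)] by simp
  then show "H #> a = H #> b" using repr_independence[OF _ assms(2) subgroup_axioms] by simp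
qed

lemma rcos_absorb:
  assumes "n \<in> H" "c \<in> carrier G"
  shows "H #> (n \<otimes> c) = H #> c"
  using assms repr_independence[OF rcosI[OF _ subset] _ subgroup_axioms] by simp

lemma lclass_eq_imp_left_multiple:
  assumes x: "x \<in> model_carrier G H" and y: "y \<in> model_carrier G H"
    and eq: "lclass_of G H x = lclass_of G H y"
  shows "\<exists>a\<in>model_carrier G H. x = model_mult G a y"
  using y
proof (cases rule: model_carrier_cases)
  case One
  then show ?thesis using x by (intro bexI[of _ x]) simp_all
next
  case Zero
  then have "x = Zero" using x eq by (cases rule: model_carrier_cases[OF x]) auto
  then show ?thesis using Zero by (intro bexI[of _ Zero]) simp_all
next
  case (Gel b)
  then obtain a where "a \<in> carrier G" "x = Gel a" using x eq by (cases rule: model_carrier_cases[OF x]) auto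
  then show ?thesis using Gel by (intro bexI[of _ "Gel (a \<otimes> inv b)"]) (auto simp: m_assoc)
next
  case (Nbar b)
  then obtain a where a: "a \<in> H" "x = Nbar a" using x eq by (cases rule: model_carrier_cases[OF x]) auto
  then have "a \<otimes> inv b \<in> H" using Nbar by simp
  then show ?thesis using Nbar a subset
    by (intro bexI[of _ "Nbar (a \<otimes> inv b)"]) (auto simp: m_assoc)
next
  case (Hel b)
  then obtain a where a: "a \<in> carrier G" "x = Hel a" "H #> a = H #> b" using x eq
    by (cases rule: model_carrier_cases[OF x]) auto
  then have "a \<otimes> inv b \<in> H" using rcos_eq_iff Hel by simp
  then show ?thesis using Hel a
    by (intro bexI[of _ "Nbar (a \<otimes> inv b)"]) (auto simp: m_assoc)
qed

lemma left_multiple_keeps_lclass: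
  assumes y: "y \<in> model_carrier G H" and a: "a \<in> model_carrier G H" and b: "b \<in> model_carrier G H"
    and eq: "y = model_mult G b (model_mult G a y)"
  shows "lclass_of G H (model_mult G a y) = lclass_of G H y"
  using y a b eq
  by (cases rule: model_carrier_cases[OF y]; cases rule: model_carrier_cases[OF a];
      cases rule: model_carrier_cases[OF b]) (auto simp: rcos_absorb)

lemma greenL_model:
  "greenL (model G H) = {(x, y). x \<in> model_carrier G H \<and> y \<in> model_carrier G H \<and> lclass_of G H x = lclass_of G H y}"
proof -
  have "(x, y) \<in> greenL (model G H) \<longleftrightarrow> lclass_of G H x = lclass_of G H y"
    if x: "x \<in> model_carrier G H" and y: "y \<in> model_carrier G H" for x y
  proof
    assume "(x, y) \<in> greenL (model G H)"
    with greenL_iff[OF model_is_monoid, of x y] x y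
    obtain a b where ab: "a \<in> model_carrier G H" "b \<in> model_carrier G H"
      and xa: "x = model_mult G a y" and yb: "y = model_mult G b x"
      by auto
    from left_multiple_keeps_lclass[OF y ab yb[unfolded xa]]
    show "lclass_of G H x = lclass_of G H y" unfolding xa .
  next
    assume "lclass_of G H x = lclass_of G H y"
    then show "(x, y) \<in> greenL (model G H)"
      using greenL_iff[OF model_is_monoid, of x y] lclass_eq_imp_left_multiple x y by simp
  qed
  moreover have "greenL (model G H) \<subseteq> model_carrier G H \<times> model_carrier G H"
    by (auto simp: greenL_def)
  ultimately show ?thesis by auto
qed

end

section \<open>Part (ii): the action on \<open>\<L>\<close>-classes is residually finite iff \<open>G/N\<close> is\<close>

context normal
begin

lemma rcos_in_quotient: "a \<in> carrier G \<Longrightarrow> H #> a \<in> carrier (G Mod H)"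
  by (simp add: FactGroup_def rcosetsI subset)

lemma FactGroup_carrierE:
  assumes "c \<in> carrier (G Mod H)"
  obtains a where "a \<in> carrier G" "c = H #> a"
  using assms by (auto simp: FactGroup_def RCOSETS_def)

lemma rcos_mult_right:
  assumes "g \<in> carrier G" "a \<in> carrier G" "a' \<in> H #> a"
  shows "H #> (g \<otimes> a') = H #> (g \<otimes> a)"
proof -
  have a': "a' \<in> carrier G" using elemrcos_carrier[OF is_group assms(2,3)] .
  have "H #> a = H #> a'" using repr_independence[OF assms(3,2) subgroup_axioms] .
  then show ?thesis using assms(1,2) a' rcos_sum by metis
qed

text \<open>Composing the labels with a homomorphism \<open>\<phi>\<close> on the coset component gives a map
  compatible with right multiplication: its kernel is a right congruence containing
  \<open>\<L>\<close>.\<close>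

lemma lclass_map_right_compatible:
  assumes \<phi>: "\<phi> \<in> hom (G Mod H) K" and x: "x \<in> model_carrier G H"
    and y: "y \<in> model_carrier G H" and m: "m \<in> model_carrier G H"
    and eq: "map_lclass \<phi> (lclass_of G H x) = map_lclass \<phi> (lclass_of G H y)"
  shows "map_lclass \<phi> (lclass_of G H (model_mult G x m)) = map_lclass \<phi> (lclass_of G H (model_mult G y m))"
proof -
  have \<phi>_mult: "\<phi> (H #> (g \<otimes> a)) = \<phi> (H #> g) \<otimes>\<^bsub>K\<^esub> \<phi> (H #> a)"
    if "g \<in> carrier G" "a \<in> carrier G" for g a
    using hom_mult[OF \<phi> rcos_in_quotient[OF that(1)] rcos_in_quotient[OF that(2)]] rcos_sum[OF that]
    by (simp add: FactGroup_def)
  show ?thesis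
    using x y m eq
    by (cases rule: model_carrier_cases[OF x]; cases rule: model_carrier_cases[OF y];
        cases rule: model_carrier_cases[OF m]) (auto simp: \<phi>_mult rcos_absorb)
qed

text \<open>If \<open>G/N\<close> is residually finite, two elements in different \<open>\<L>\<close>-classes are kept apart
  by the labels composed with a finite quotient of \<open>G/N\<close>, which has finite image.\<close>

lemma quotient_res_finite_imp_L_action:
  assumes rf: "group_res_finite (G Mod H)"
  shows "L_action_res_finite (model G H)"
  unfolding L_action_res_finite_def
proof (intro ballI impI)
  fix s t assume "s \<in> carrier (model G H)" "t \<in> carrier (model G H)"
    and st: "(s, t) \<notin> greenL (model G H)"
  then have s: "s \<in> model_carrier G H" and t: "t \<in> model_carrier G H" by simp_all
  obtain K :: "nat monoid" and \<phi> where K: "group K" "finite (carrier K)" "\<phi> \<in> hom (G Mod H) K"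
    and sep: "map_lclass \<phi> (lclass_of G H s) \<noteq> map_lclass \<phi> (lclass_of G H t)"
  proof (rule lclass_distinct_cases)
    show "lclass_of G H s \<noteq> lclass_of G H t" using st s t by (simp add: greenL_model)
    assume "\<And>\<phi> :: _ \<Rightarrow> nat. map_lclass \<phi> (lclass_of G H s) \<noteq> map_lclass \<phi> (lclass_of G H t)"
    then show thesis by (rule that[OF trivial_quotient])
  next
    fix c d assume cd: "c \<noteq> d" "lclass_of G H s = KH c" "lclass_of G H t = KH d"
    have "c \<in> carrier (G Mod H)" if "lclass_of G H x = KH c" "x \<in> model_carrier G H" for x c
      using that(2,1) rcos_in_quotient by (cases rule: model_carrier_cases) auto
    then have "c \<in> carrier (G Mod H)" "d \<in> carrier (G Mod H)" using cd s t by blast+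
    from rf[unfolded group_res_finite_def, rule_format, OF this cd(1)]
    obtain K :: "nat monoid" and \<phi> where "group K" "finite (carrier K)" "\<phi> \<in> hom (G Mod H) K"
      "\<phi> c \<noteq> \<phi> d"
      by blast
    then show thesis using that cd by simp
  qed
  define \<kappa> where "\<kappa> x = map_lclass \<phi> (lclass_of G H x)" for x
  define \<rho> where "\<rho> = {(x, y). x \<in> carrier (model G H) \<and> y \<in> carrier (model G H) \<and> \<kappa> x = \<kappa> y}"
  have "\<kappa> x \<in> {K1, K0, KG, KN} \<union> KH ` carrier K" if "x \<in> model_carrier G H" for x
    using that K(3) rcos_in_quotient
    by (cases rule: model_carrier_cases) (auto simp: \<kappa>_def hom_in_carrier)
  then have "\<kappa> ` model_carrier G H \<subseteq> {K1, K0, KG, KN} \<union> KH ` carrier K" by blast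
  then have fin: "finite (\<kappa> ` carrier (model G H))" using K(2) by (simp add: finite_subset)
  have compat:  "\<kappa> (x \<otimes>\<^bsub>model G H\<^esub> m) = \<kappa> (y \<otimes>\<^bsub>model G H\<^esub> m)"
    if "x \<in> carrier (model G H)" "y \<in> carrier (model G H)" "m \<in> carrier (model G H)" "\<kappa> x = \<kappa> y"
    for x y m
    using that unfolding \<kappa>_def model_simps by (intro lclass_map_right_compatible[OF K(3)]) simp_all
  note kernel = kernel_right_congruence[OF compat monoid.m_closed[OF model_is_monoid] fin,
      folded \<rho>_def]
  have "greenL (model G H) \<subseteq> \<rho>" by (auto simp: greenL_model \<rho>_def \<kappa>_def)
  moreover have "(s, t) \<notin> \<rho>" using sep by (simp add: \<rho>_def \<kappa>_def)
  ultimately show "\<exists>\<rho>. right_congruence (model G H) \<rho> \<and> finite (carrier (model G H) // \<rho>)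
      \<and> greenL (model G H) \<subseteq> \<rho> \<and> (s, t) \<notin> \<rho>"
    using kernel by blast
qed

text \<open>Conversely, fix a right congruence \<open>\<rho>\<close> of finite index containing \<open>\<L>\<close>. Then \<open>G/N\<close>
  acts on the finitely many \<open>\<rho>\<close>-classes of the elements \<open>hg\<close> by right multiplication
  with any representative of a coset; \<open>\<L> \<subseteq> \<rho>\<close> makes this independent of the
  representative.\<close>

definition coset_act :: "('a melem \<times> 'a melem) set \<Rightarrow> 'a melem set \<Rightarrow> 'a set \<Rightarrow> 'a melem set" where
  "coset_act \<rho> q c = class_act (model G H) \<rho> q (Gel (SOME a. a \<in> c))"

lemma coset_act_class:
  assumes rc: "right_congruence (model G H) \<rho>" and L: "greenL (model G H) \<subseteq> \<rho>"
    and g: "g \<in> carrier G" and a: "a \<in> carrier G"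
  shows "coset_act \<rho> (\<rho> `` {Hel g}) (H #> a) = \<rho> `` {Hel (g \<otimes> a)}"
proof -
  define a' where "a' = (SOME a'. a' \<in> H #> a)"
  have a'_coset: "a' \<in> H #> a"
    unfolding a'_def using rcos_self[OF a subgroup_axioms] by (rule someI)
  then have a': "a' \<in> carrier G" using elemrcos_carrier[OF is_group a] by blast
  have "coset_act \<rho> (\<rho> `` {Hel g}) (H #> a) = \<rho> `` {Hel (g \<otimes> a')}"
    using class_act_class[OF rc, of "Hel g" "Gel a'"] g a' by (simp add: coset_act_def a'_def)
  also have "\<dots> = \<rho> `` {Hel (g \<otimes> a)}"
  proof -
    have "(Hel (g \<otimes> a'), Hel (g \<otimes> a)) \<in> greenL (model G H)"
      using rcos_mult_right[OF g a a'_coset] g a a' by (simp add: greenL_model)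
    moreover have "equiv (model_carrier G H) \<rho>" using rc by (simp add: right_congruence_def)
    ultimately show ?thesis using L equiv_class_eq by (metis subsetD)
  qed
  finally show ?thesis .
qed

lemma coset_action:
  assumes rc: "right_congruence (model G H) \<rho>" and L: "greenL (model G H) \<subseteq> \<rho>"
  defines "Q \<equiv> (\<lambda>g. \<rho> `` {Hel g}) ` carrier G"
  shows "\<And>q c. q \<in> Q \<Longrightarrow> c \<in> carrier (G Mod H) \<Longrightarrow> coset_act \<rho> q c \<in> Q"
    and "\<And>q. q \<in> Q \<Longrightarrow> coset_act \<rho> q \<one>\<^bsub>G Mod H\<^esub> = q"
    and "\<And>q c d. q \<in> Q \<Longrightarrow> c \<in> carrier (G Mod H) \<Longrightarrow> d \<in> carrier (G Mod H) \<Longrightarrow>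
           coset_act \<rho> (coset_act \<rho> q c) d = coset_act \<rho> q (c \<otimes>\<^bsub>G Mod H\<^esub> d)"
proof -
  note act = coset_act_class[OF rc L]
  show "coset_act \<rho> q c \<in> Q" if q: "q \<in> Q" and c: "c \<in> carrier (G Mod H)" for q c
  proof -
    obtain g where "q = \<rho> `` {Hel g}" "g \<in> carrier G" using q unfolding Q_def by (rule imageE)
    moreover obtain a where "a \<in> carrier G" "c = H #> a" using c by (rule FactGroup_carrierE)
    ultimately have "coset_act \<rho> q c = \<rho> `` {Hel (g \<otimes> a)}" "g \<otimes> a \<in> carrier G"
      using act by simp_all
    then show ?thesis unfolding Q_def by (simp only:) (rule imageI)
  qed
  show "coset_act \<rho> q \<one>\<^bsub>G Mod H\<^esub> = q" if q: "q \<in> Q" for q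
  proof -
    obtain g where q_eq: "q = \<rho> `` {Hel g}" and g: "g \<in> carrier G"
      using q unfolding Q_def by (rule imageE)
    have "\<one>\<^bsub>G Mod H\<^esub> = H #> \<one>" using subset by (simp add: FactGroup_def)
    then have "coset_act \<rho> q \<one>\<^bsub>G Mod H\<^esub> = \<rho> `` {Hel (g \<otimes> \<one>)}"
      using act[OF g one_closed] q_eq by simp
    then show ?thesis using g q_eq by simp
  qed
  show "coset_act \<rho> (coset_act \<rho> q c) d = coset_act \<rho> q (c \<otimes>\<^bsub>G Mod H\<^esub> d)"
    if q: "q \<in> Q" and c: "c \<in> carrier (G Mod H)" and d: "d \<in> carrier (G Mod H)" for q c d
  proof -
    obtain g where q_eq: "q = \<rho> `` {Hel g}" and g: "g \<in> carrier G"
      using q unfolding Q_def by (rule imageE)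
    obtain a where a: "a \<in> carrier G" and c_eq: "c = H #> a" using c by (rule FactGroup_carrierE)
    obtain b where b: "b \<in> carrier G" and d_eq: "d = H #> b" using d by (rule FactGroup_carrierE)
    have "coset_act \<rho> (coset_act \<rho> q c) d = \<rho> `` {Hel (g \<otimes> a \<otimes> b)}"
      using act[OF g a] act[OF m_closed[OF g a] b] q_eq c_eq d_eq by simp
    moreover have "c \<otimes>\<^bsub>G Mod H\<^esub> d = H #> (a \<otimes> b)"
      using rcos_sum[OF a b] c_eq d_eq by (simp add: FactGroup_def)
    ultimately show ?thesis using act[OF g m_closed[OF a b]] q_eq g a b by (simp add: m_assoc)
  qed
qed

text \<open>Distinct cosets \<open>Ng\<^sub>1 \<noteq> Ng\<^sub>2\<close> give non-\<open>\<L>\<close>-related elements \<open>hg\<^sub>1, hg\<^sub>2\<close>; a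
  separating right congruence makes \<open>Ng\<^sub>1, Ng\<^sub>2\<close> act differently on the class of \<open>h\<close>,
  so the finite action separates them.\<close>

lemma L_action_imp_quotient_res_finite:
  assumes rf: "L_action_res_finite (model G H)"
  shows "group_res_finite (G Mod H)"
  unfolding group_res_finite_def
proof (intro ballI impI)
  fix c1 c2 assume c1: "c1 \<in> carrier (G Mod H)" and c2: "c2 \<in> carrier (G Mod H)" and ne: "c1 \<noteq> c2"
  obtain g1 where g1: "g1 \<in> carrier G" "c1 = H #> g1" using c1 by (rule FactGroup_carrierE)
  obtain g2 where g2: "g2 \<in> carrier G" "c2 = H #> g2" using c2 by (rule FactGroup_carrierE)
  have "Hel g1 \<in> carrier (model G H)" "Hel g2 \<in> carrier (model G H)"
    "(Hel g1, Hel g2) \<notin> greenL (model G H)"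
    using ne g1 g2 by (simp_all add: greenL_model)
  from rf[unfolded L_action_res_finite_def, rule_format, OF this]
  obtain \<rho> where rc: "right_congruence (model G H) \<rho>"
      and fin: "finite (carrier (model G H) // \<rho>)"
      and L: "greenL (model G H) \<subseteq> \<rho>" and sep: "(Hel g1, Hel g2) \<notin> \<rho>"
    by blast
  have eq: "equiv (model_carrier G H) \<rho>" using rc by (simp add: right_congruence_def)
  let ?Q = "(\<lambda>g. \<rho> `` {Hel g}) ` carrier G"
  have "?Q \<subseteq> carrier (model G H) // \<rho>" by (auto intro: quotientI)
  then have "finite ?Q" using fin by (rule finite_subset)
  moreover note coset_action[OF rc L]
  moreover have "\<rho> `` {Hel \<one>} \<in> ?Q" by blast
  moreover have "coset_act \<rho> (\<rho> `` {Hel \<one>}) c1 = \<rho> `` {Hel g1}"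
    "coset_act \<rho> (\<rho> `` {Hel \<one>}) c2 = \<rho> `` {Hel g2}"
    using coset_act_class[OF rc L one_closed] g1 g2 by simp_all
  then have "coset_act \<rho> (\<rho> `` {Hel \<one>}) c1 \<noteq> coset_act \<rho> (\<rho> `` {Hel \<one>}) c2"
    using sep eq_equiv_class_iff[OF eq] g1 g2 by simp
  ultimately show "\<exists>(F :: nat monoid) f. group F \<and> finite (carrier F) \<and> f \<in> hom (G Mod H) F
      \<and> f c1 \<noteq> f c2"
    by (rule finite_action_separation[OF factorgroup_is_group _ _ _ _ _ c1 c2])
qed

end

theorem mainTheorem5:
  fixes G :: "('g, 'b) monoid_scheme" and N :: "'g set"
  assumes "group G" and "N \<lhd> G"
  shows "(monoid_res_finite (MGN G N) \<longleftrightarrow> group_res_finite G)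
       \<and> (L_action_res_finite (MGN G N) \<longleftrightarrow> group_res_finite (G Mod N))"
proof -
  interpret normal N G by (rule assms(2))
  have "monoid_res_finite (MGN G N) \<longleftrightarrow> group_res_finite G"
    using MGN_res_finite_iff_model(1) model_res_finite_imp_group group_res_finite_imp_model
    by blast
  moreover have "L_action_res_finite (MGN G N) \<longleftrightarrow> group_res_finite (G Mod N)"
    using MGN_res_finite_iff_model(2) quotient_res_finite_imp_L_action
      L_action_imp_quotient_res_finite by blast
  ultimately show ?thesis ..
qed

end
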